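(* Assume $\|F\|<\frac{c_1}{2\sqrt{c_2c_3}}$. Then for every $\varepsilon\in(0,\varepsilon_0]$ the set $\mathbb D_\varepsilon$ is invariant for $S(t)$, i.e. $S(t)\mathbb D_\varepsilon\subset\mathbb D_\varepsilon$ for all $t\ge0$.
   Context: Let $\mathfrak I=(a,b)\subset\mathbb R$ be a bounded interval, $\mathcal H=L^2(\mathfrak I)$ with inner product $\langle\cdot,\cdot\rangle$ and norm $\|\cdot\|$. Let $A=-\partial_{xx}$ with domain $H^2(\mathfrak I)\cap H^1_0(\mathfrak I)$, $\lambda_1>0$ its first eigenvalue, $\mathcal H^r=D(A^{r/2})$, $\|u\|_r=\|A^{r/2}u\|$, $B=I+A$, and on $\mathcal H^r$ the inner product $(u,v)_r=\langle A^{(r-1)/2}B^{1/2}u,A^{(r-1)/2}B^{1/2}v\rangle$ with norm $|||u|||_r^2=\|u\|_{r-1}^2+\|u\|_r^2$. Set $\omega=\sqrt{(1+\lambda_1)/\lambda_1}$. Let $\mu:(0,\infty)\to[0,\infty)$, $\mu\not\equiv0$, nonincreasing, absolutely continuous, with $\kappa:=\int_0^\infty\mu(s)\,ds\in(0,\infty)$, $\int_0^\infty s\mu(s)\,ds=1$, $\lim_{s\to0^+}\mu(s)<\infty$, and $\mu'+\delta\mu\le0$ a.e. for some $\delta>0$. $\mathcal M=L^2_\mu(\mathbb R^+;\mathcal H^1)$ with norm $\|\eta\|_{\mathcal M}^2=\int_0^\infty\mu(s)\|\eta(s)\|_1^2ds$; $\mathbf H=\mathcal H^1\times\mathcal M$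 with $\|(u,\eta)\|_{\mathbf H}^2=|||u|||_1^2+\|\eta\|_{\mathcal M}^2$. $T\eta=-\partial_s\eta$ with domain $\{\eta\in\mathcal M:\partial_s\eta\in\mathcal M,\ \lim_{s\to0}\|\eta(s)\|_1=0\}$. For $f\in L^2(\mathfrak I)$, $S(t)$ is the strongly continuous semigroup on $\mathbf H$ generated by $Bu_t+u_x+\int_0^\infty\mu(s)A\eta(s)\,ds+uu_x=f$, $\eta_t=T\eta+u$ (Dirichlet conditions on $u$), $S(t)z=(u(t),\eta^t)$. Let $F(x)=\int_a^xf(y)\,dy$ and for $\varepsilon>0$, $z=(u,\eta)\in\mathbf H$, $$\Lambda_\varepsilon(z)=\|z\|_{\mathbf H}^2+\frac2\kappa\int_0^\infty\mu(s)\langle F,\eta_x(s)\rangle\,ds+\frac2\kappa\|F\|^2-\frac{\varepsilon}{\sqrt\kappa}\int_0^\infty\mu(s)(u,\eta(s))_1\,ds.$$ Let $c_1,c_2,c_3>0$ and $\varepsilon_0\in(0,\frac1{2\omega})$ be constants depending only on $\mathfrak I,\mu$ such that for every $z\in\mathbf H$ and $\varepsilon\in(0,\varepsilon_0]$, $\mathcal L_\varepsilon(t)=\Lambda_\varepsilon(S(t)z)$ satisfies $\mathcal L_\varepsilon'+\varepsilon c_1\mathcal L_\varepsilon\le c_2\|F\|^2+c_3\varepsilon^2\mathcal L_\varepsilon^2$ for all $t\ge0$. Set $c_*=\sqrt{c_2/c_3}\,\big(\frac{c_1}{\sqrt{c_2c_3}}-\|F\|\big)$ and, for $\varepsilon\in(0,\varepsilon_0]$,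 $\mathbb D_\varepsilon=\{z\in\mathbf H:\Lambda_\varepsilon(z)\le c_*/\varepsilon\}$. *)

theory Defs
  imports "HOL-Analysis.Analysis"
begin

text \<open>The constant c_* = sqrt(c2/c3) (c1/sqrt(c2 c3) - norm F), with nF standing for norm F.\<close>
definition cstar :: "real \<Rightarrow> real \<Rightarrow> real \<Rightarrow> real \<Rightarrow> real" where
  "cstar c1 c2 c3 nF = sqrt (c2 / c3) * (c1 / sqrt (c2 * c3) - nF)"

definition Dset :: "(real \<Rightarrow> 'h \<Rightarrow> real) \<Rightarrow> real \<Rightarrow> real \<Rightarrow> 'h set" where
  "Dset Lam eps cs = {z. Lam eps z \<le> cs / eps}"

end

theory Submission
  imports Defs
begin

text \<open>Along a trajectory, \<open>L(t) = \<Lambda>\<^sub>\<epsilon>(S(t)z)\<close> satisfies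
  \<open>L' \<le> c\<^sub>2\<parallel>F\<parallel>\<^sup>2 - \<epsilon>c\<^sub>1L + c\<^sub>3\<epsilon>\<^sup>2L\<^sup>2\<close>. In the variable \<open>y = \<epsilon>L\<close> the right-hand side is
  \<open>(c\<^sub>3y\<^sup>2 - c\<^sub>1y + c\<^sub>2\<parallel>F\<parallel>\<^sup>2)/\<epsilon>\<close>, and the smallness of \<open>\<parallel>F\<parallel>\<close> places \<open>c\<^sub>*\<close> between the
  two roots of this quadratic. Hence, in a band just above the level \<open>L = c\<^sub>*/\<epsilon>\<close>,
  \<open>L'\<close> is bounded by a multiple of the excess \<open>L - c\<^sub>*/\<epsilon>\<close>, and a Gronwall argument from
  the last time \<open>L\<close> was below the level shows that the level is never crossed.\<close>

lemma exp_weighted_excess_antimono: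
  fixes f :: "real \<Rightarrow> real"
  assumes "a \<le> b" and "continuous_on {a..b} f"
    and "\<And>x. a < x \<Longrightarrow> x < b \<Longrightarrow> \<exists>D. (f has_real_derivative D) (at x) \<and> D \<le> M * (f x - K)"
  shows "exp (- M * b) * (f b - K) \<le> exp (- M * a) * (f a - K)"
proof (rule DERIV_nonpos_imp_decreasing_open[OF \<open>a \<le> b\<close>])
  show "continuous_on {a..b} (\<lambda>s. exp (- M * s) * (f s - K))"
    using assms(2) by (intro continuous_intros)
next
  fix x assume "a < x" "x < b"
  then obtain D where D: "(f has_real_derivative D) (at x)" and "D \<le> M * (f x - K)"
    using assms(3) by blast
  then have "exp (- M * x) * (D - M * (f x - K)) \<le> 0"
    by (intro mult_nonneg_nonpos) simp_all
  then have "exp (- M * x) * (- M) * (f x - K) + exp (- M * x) * D \<le> 0"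
    by (simp add: algebra_simps)
  moreover have "((\<lambda>s. exp (- M * s) * (f s - K)) has_real_derivative
      exp (- M * x) * (- M) * (f x - K) + exp (- M * x) * D) (at x)"
    by (auto intro!: derivative_eq_intros D)
  ultimately show "\<exists>y. ((\<lambda>s. exp (- M * s) * (f s - K)) has_real_derivative y) (at x) \<and> y \<le> 0"
    by blast
qed

lemma last_time_below_level:
  fixes f :: "real \<Rightarrow> real"
  assumes "0 \<le> T" and "continuous_on {0..T} f" and "f 0 \<le> K" and "K < f T"
  obtains t0 where "0 \<le> t0" "t0 < T" "f t0 \<le> K" "\<And>s. t0 < s \<Longrightarrow> s \<le> T \<Longrightarrow> K < f s"
proof -
  define B where "B = {s \<in> {0..T}. f s \<le> K}"
  have "0 \<in> B" using assms(1,3) by (simp add: B_def)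
  have "bdd_above B" unfolding B_def by (rule bdd_aboveI[of _ T]) auto
  have "closed B"
    unfolding B_def by (rule continuous_on_closed_Collect_le[OF assms(2) continuous_on_const]) simp
  have "Sup B \<in> B"
    using closed_contains_Sup \<open>closed B\<close> \<open>0 \<in> B\<close> \<open>bdd_above B\<close> by blast
  moreover have "K < f s" if "Sup B < s" "s \<le> T" for s
    using cSup_upper[OF _ \<open>bdd_above B\<close>, of s] that \<open>Sup B \<in> B\<close> by (force simp: B_def)
  moreover have "Sup B \<noteq> T" using \<open>Sup B \<in> B\<close> assms(4) by (auto simp: B_def)
  ultimately show ?thesis using that by (auto simp: B_def)
qed

lemma level_barrier:
  fixes f :: "real \<Rightarrow> real"
  assumes "M \<ge> 0" and "r > 0" and "f 0 \<le> K"
    and deriv: "\<And>t. t \<ge> 0 \<Longrightarrow> \<exists>D. (f has_real_derivative D) (at t within {0..}) \<and>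
               (K \<le> f t \<longrightarrow> f t \<le> K + r \<longrightarrow> D \<le> M * (f t - K))"
    and "T \<ge> 0"
  shows "f T \<le> K"
proof (rule ccontr)
  assume "\<not> f T \<le> K"
  have cont: "continuous_on {0..} f"
    using deriv by (metis DERIV_continuous_on atLeast_iff)
  then have cont_T: "continuous_on {0..T} f" by (rule continuous_on_subset) auto
  obtain t0 where t0: "0 \<le> t0" "t0 < T" "f t0 \<le> K" and above: "\<And>s. t0 < s \<Longrightarrow> s \<le> T \<Longrightarrow> K < f s"
    using last_time_below_level[OF \<open>T \<ge> 0\<close> cont_T \<open>f 0 \<le> K\<close>] \<open>\<not> f T \<le> K\<close> by auto
  have "continuous (at t0 within {0..T}) f"
    using cont_T t0 by (simp add: continuous_on_eq_continuous_within)
  then obtain d where "d > 0" and d: "\<And>s. s \<in> {0..T} \<Longrightarrow> dist s t0 < d \<Longrightarrow> dist (f s) (f t0) < r"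
    unfolding continuous_within_eps_delta using \<open>r > 0\<close> by blast
  define t2 where "t2 = min T (t0 + d/2)"
  have t2: "t0 < t2" "t2 \<le> T" using \<open>d > 0\<close> t0 by (auto simp: t2_def)
  have in_band: "K \<le> f s \<and> f s \<le> K + r" if "t0 < s" "s \<le> t2" for s
    using above[of s] d[of s] that t0 t2 \<open>d > 0\<close> by (auto simp: t2_def dist_real_def)
  have "exp (- M * t2) * (f t2 - K) \<le> exp (- M * t0) * (f t0 - K)"
  proof (rule exp_weighted_excess_antimono)
    show "continuous_on {t0..t2} f" using cont by (rule continuous_on_subset) (use t0 in auto)
  next
    fix x assume x: "t0 < x" "x < t2"
    then obtain D where D: "(f has_real_derivative D) (at x within {0..})"
      and "K \<le> f x \<longrightarrow> f x \<le> K + r \<longrightarrow> D \<le> M * (f x - K)"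
      using deriv[of x] t0 by auto
    moreover have "at x within {0..} = at x" using x t0 by (intro at_within_interior) auto
    ultimately show "\<exists>D. (f has_real_derivative D) (at x) \<and> D \<le> M * (f x - K)"
      using in_band[of x] x by auto
  qed (use t2 in simp)
  moreover have "exp (- M * t0) * (f t0 - K) \<le> 0" using t0 by (simp add: mult_nonneg_nonpos)
  moreover have "0 < exp (- M * t2) * (f t2 - K)" using above[of t2] t2 by simp
  ultimately show False by linarith
qed

lemma riccati_rate_le_excess:
  fixes c1 c3 q cs eps r D L :: real
  assumes "c1 \<ge> 0" "c3 \<ge> 0" "eps > 0"
    and below_root: "c3 * cs\<^sup>2 - c1 * cs + q \<le> 0"
    and rate: "D + eps * c1 * L \<le> q + c3 * eps\<^sup>2 * L\<^sup>2"
    and band: "cs / eps \<le> L" "L \<le> cs / eps + r"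
  shows "D \<le> eps * c3 * (2 * cs + eps * r) * (L - cs / eps)"
proof -
  define y where "y = eps * L"
  have "cs \<le> y" "y \<le> cs + eps * r"
    using band \<open>eps > 0\<close> by (simp_all add: y_def field_simps)
  have "D \<le> q + c3 * y\<^sup>2 - c1 * y"
    using rate by (simp add: y_def power_mult_distrib algebra_simps)
  also have "\<dots> = (c3 * cs\<^sup>2 - c1 * cs + q) + (y - cs) * (c3 * (y + cs) - c1)"
    by (simp add: algebra_simps power2_eq_square)
  also have "\<dots> \<le> (y - cs) * (c3 * (y + cs) - c1)" using below_root by simp
  also have "\<dots> \<le> (y - cs) * (c3 * (2 * cs + eps * r))"
  proof (rule mult_left_mono)
    have "c3 * (y + cs) \<le> c3 * (2 * cs + eps * r)"
      using \<open>y \<le> cs + eps * r\<close> \<open>c3 \<ge> 0\<close> by (intro mult_left_mono) auto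
    then show "c3 * (y + cs) - c1 \<le> c3 * (2 * cs + eps * r)" using \<open>c1 \<ge> 0\<close> by linarith
  qed (use \<open>cs \<le> y\<close> in simp)
  also have "\<dots> = eps * c3 * (2 * cs + eps * r) * (L - cs / eps)"
    using \<open>eps > 0\<close> by (simp add: y_def field_simps)
  finally show ?thesis .
qed

lemma cstar_eq:
  assumes "c2 > 0" "c3 > 0"
  shows "cstar c1 c2 c3 nF = (c1 - sqrt (c2 * c3) * nF) / c3"
proof -
  have "sqrt (c2 / c3) = sqrt (c2 * c3) / c3"
    using assms by (simp add: real_sqrt_divide real_sqrt_mult field_simps)
  then have "cstar c1 c2 c3 nF = sqrt (c2 * c3) / c3 * (c1 / sqrt (c2 * c3) - nF)"
    by (simp add: cstar_def)
  also have "\<dots> = (c1 - sqrt (c2 * c3) * nF) / c3"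
    using assms by (simp add: field_simps)
  finally show ?thesis .
qed

context
  fixes c1 c2 c3 nF :: real
  assumes pos: "c2 > 0" "c3 > 0" and nF: "0 \<le> nF" "nF < c1 / (2 * sqrt (c2 * c3))"
begin

lemma twice_sqrt_mult_nF_less: "2 * (sqrt (c2 * c3) * nF) < c1"
proof -
  have "sqrt (c2 * c3) > 0" using pos by simp
  then show ?thesis using nF(2) by (simp add: field_simps)
qed

lemma cstar_pos: "cstar c1 c2 c3 nF > 0"
proof -
  have "0 \<le> sqrt (c2 * c3) * nF" using nF pos by simp
  then show ?thesis using twice_sqrt_mult_nF_less pos by (simp add: cstar_eq)
qed

text \<open>With \<open>a = \<surd>(c\<^sub>2c\<^sub>3)\<parallel>F\<parallel>\<close>, the quadratic at \<open>c\<^sub>*\<close> equals \<open>a(2a - c\<^sub>1)/c\<^sub>3\<close>.\<close>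

lemma cstar_below_root: "c3 * (cstar c1 c2 c3 nF)\<^sup>2 - c1 * cstar c1 c2 c3 nF + c2 * nF\<^sup>2 \<le> 0"
proof -
  define a where "a = sqrt (c2 * c3) * nF"
  define cs where "cs = cstar c1 c2 c3 nF"
  have c3_cs: "c3 * cs = c1 - a" using pos by (simp add: cstar_eq cs_def a_def)
  have a2: "a\<^sup>2 = c2 * c3 * nF\<^sup>2" using pos by (simp add: a_def power_mult_distrib)
  have "c3 * (c3 * cs\<^sup>2 - c1 * cs + c2 * nF\<^sup>2) = (c3 * cs)\<^sup>2 - c1 * (c3 * cs) + c2 * c3 * nF\<^sup>2"
    by (simp add: algebra_simps power2_eq_square)
  also have "\<dots> = (c1 - a)\<^sup>2 - c1 * (c1 - a) + a\<^sup>2" by (simp only: c3_cs a2)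
  also have "\<dots> = a * (2 * a - c1)" by (simp add: algebra_simps power2_eq_square)
  also have "\<dots> \<le> 0"
    using twice_sqrt_mult_nF_less nF pos by (intro mult_nonneg_nonpos) (simp_all add: a_def)
  finally show ?thesis using pos by (simp add: cs_def mult_le_0_iff)
qed

end

theorem proposition8p4:
  fixes S :: "real \<Rightarrow> 'h \<Rightarrow> 'h"
    and Lam :: "real \<Rightarrow> 'h \<Rightarrow> real"
    and c1 c2 c3 eps0 nF :: real
  assumes S0: "\<And>z. S 0 z = z"
    and S_semigroup: "\<And>t s z. t \<ge> 0 \<Longrightarrow> s \<ge> 0 \<Longrightarrow> S (t + s) z = S t (S s z)"
    and pos: "c1 > 0" "c2 > 0" "c3 > 0" "eps0 > 0"
    and nF_nonneg: "nF \<ge> 0"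
    and diff_ineq: "\<And>z eps t. 0 < eps \<Longrightarrow> eps \<le> eps0 \<Longrightarrow> t \<ge> 0 \<Longrightarrow>
        \<exists>D. ((\<lambda>s. Lam eps (S s z)) has_real_derivative D) (at t within {0..}) \<and>
            D + eps * c1 * Lam eps (S t z) \<le> c2 * nF\<^sup>2 + c3 * eps\<^sup>2 * (Lam eps (S t z))\<^sup>2"
    and small_F: "nF < c1 / (2 * sqrt (c2 * c3))"
  shows "\<forall>eps. 0 < eps \<and> eps \<le> eps0 \<longrightarrow>
           (\<forall>t\<ge>0. S t ` Dset Lam eps (cstar c1 c2 c3 nF) \<subseteq> Dset Lam eps (cstar c1 c2 c3 nF))"
proof (intro allI impI subsetI)
  fix eps t w
  assume eps: "0 < eps \<and> eps \<le> eps0" and "0 \<le> t" and "w \<in> S t ` Dset Lam eps (cstar c1 c2 c3 nF)"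
  define cs where "cs = cstar c1 c2 c3 nF"
  obtain z where z: "Lam eps z \<le> cs / eps" and w: "w = S t z"
    using \<open>w \<in> _\<close> by (auto simp: Dset_def cs_def)
  have "cs > 0" and root: "c3 * cs\<^sup>2 - c1 * cs + c2 * nF\<^sup>2 \<le> 0"
    using cstar_pos cstar_below_root pos nF_nonneg small_F by (simp_all add: cs_def)
  have "Lam eps (S t z) \<le> cs / eps"
  proof (rule level_barrier[where f = "\<lambda>s. Lam eps (S s z)" and T = t and r = 1
        and M = "eps * c3 * (2 * cs + eps * 1)"])
    fix s :: real assume "0 \<le> s"
    then show "\<exists>D. ((\<lambda>s. Lam eps (S s z)) has_real_derivative D) (at s within {0..}) \<and>
        (cs / eps \<le> Lam eps (S s z) \<longrightarrow> Lam eps (S s z) \<le> cs / eps + 1 \<longrightarrow>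
          D \<le> eps * c3 * (2 * cs + eps * 1) * (Lam eps (S s z) - cs / eps))"
      using diff_ineq[of eps s z] eps riccati_rate_le_excess[OF _ _ _ root] pos by (meson less_imp_le)
  qed (use eps pos \<open>cs > 0\<close> z S0 \<open>0 \<le> t\<close> in auto)
  then show "w \<in> Dset Lam eps (cstar c1 c2 c3 nF)" by (simp add: Dset_def w cs_def)
qed

end
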